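(* Let $Y$ and $Z$ be sofic shifts and let $(G,L_G)$ and $(H,L_H)$ be right-resolving labeled graphs presenting $Y$ and $Z$, respectively. Assume that there are conjugacies $\psi : Y \to Z$ and $\phi : X_G \to X_H$ such that $L_H\circ\phi=\psi\circ L_G$. Then there is a conjugacy $\phi'' : X_{G''} \to X_{H''}$ such that $L_{H''}\circ\phi''=\psi\circ L_{G''}$.
   Context: A labeled graph $(H,L_H)$: finite directed graph (vertices $V_H$, edges $E_H$, source/terminal maps $s_H,t_H$) without sinks or sources, labeling $L_H:E_H\to A$, edge shift $X_H$; $L_H$ applied coordinatewise; it presents $L_H(X_H)$. Right-resolving: distinct edges with the same source have distinct labels. Conjugacy: shift-commuting homeomorphism. Subset construction $(H'',L_{H''})$: vertices are non-empty subsets of $V_H$; for vertices $F,F'$ and a symbol $a$ there is an edge from $F$ to $F'$ labeled $a$ when $F\subseteq\{s_H(e): L_H(e)=a\}$ and $F'=\{t_H(e): s_H(e)\in F, L_H(e)=a\}$; the graph is then trimmed by repeatedly removing sinks and sources. $(G'',L_{G''})$ is defined likewise from $(G,L_G)$. *)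

theory Defs
  imports "HOL-Analysis.Analysis"
begin

definition shift :: "(int \<Rightarrow> 'a) \<Rightarrow> int \<Rightarrow> 'a" where
  "shift x = (\<lambda>i. x (i + 1))"

definition full_shift_top :: "(int \<Rightarrow> 'a) topology" where
  "full_shift_top = product_topology (\<lambda>_. discrete_topology UNIV) UNIV"

definition conjugacy ::
  "(int \<Rightarrow> 'a) set \<Rightarrow> (int \<Rightarrow> 'b) set \<Rightarrow> ((int \<Rightarrow> 'a) \<Rightarrow> (int \<Rightarrow> 'b)) \<Rightarrow> bool" where
  "conjugacy X Y f \<longleftrightarrow>
     homeomorphic_map (subtopology full_shift_top X) (subtopology full_shift_top Y) f \<and>
     (\<forall>x\<in>X. f (shift x) = shift (f x))"

definition edge_shift :: "'e set \<Rightarrow> ('e \<Rightarrow> 'v) \<Rightarrow> ('e \<Rightarrow> 'v) \<Rightarrow> (int \<Rightarrow> 'e) set" where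
  "edge_shift E s t = {x. \<forall>i. x i \<in> E \<and> t (x i) = s (x (i + 1))}"

definition label_map :: "('e \<Rightarrow> 'a) \<Rightarrow> (int \<Rightarrow> 'e) \<Rightarrow> int \<Rightarrow> 'a" where
  "label_map L x = (\<lambda>i. L (x i))"

definition fin_graph_no_sink_source ::
  "'v set \<Rightarrow> 'e set \<Rightarrow> ('e \<Rightarrow> 'v) \<Rightarrow> ('e \<Rightarrow> 'v) \<Rightarrow> bool" where
  "fin_graph_no_sink_source V E s t \<longleftrightarrow>
     finite V \<and> finite E \<and> (\<forall>e\<in>E. s e \<in> V \<and> t e \<in> V) \<and>
     (\<forall>v\<in>V. \<exists>e\<in>E. s e = v) \<and> (\<forall>v\<in>V. \<exists>e\<in>E. t e = v)"

definition right_resolving :: "'e set \<Rightarrow> ('e \<Rightarrow> 'v) \<Rightarrow> ('e \<Rightarrow> 'a) \<Rightarrow> bool" where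
  "right_resolving E s L \<longleftrightarrow>
     (\<forall>e\<in>E. \<forall>e'\<in>E. s e = s e' \<and> L e = L e' \<longrightarrow> e = e')"

text \<open>Edges of the subset graph are triples (F, a, F'): source F, label a, terminal F'.\<close>
definition sc_src :: "'v set \<times> 'a \<times> 'v set \<Rightarrow> 'v set" where
  "sc_src d = fst d"
definition sc_trg :: "'v set \<times> 'a \<times> 'v set \<Rightarrow> 'v set" where
  "sc_trg d = snd (snd d)"
definition sc_label :: "'v set \<times> 'a \<times> 'v set \<Rightarrow> 'a" where
  "sc_label d = fst (snd d)"

definition sc_vertices0 :: "'v set \<Rightarrow> 'v set set" where
  "sc_vertices0 V = Pow V - {{}}"

definition sc_edges0 ::
  "'v set \<Rightarrow> 'e set \<Rightarrow> ('e \<Rightarrow> 'v) \<Rightarrow> ('e \<Rightarrow> 'v) \<Rightarrow> ('e \<Rightarrow> 'a) \<Rightarrow> ('v set \<times> 'a \<times> 'v set) set" where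
  "sc_edges0 V E s t L =
     {(F, a, F'). F \<in> sc_vertices0 V \<and> F' \<in> sc_vertices0 V \<and>
        F \<subseteq> {s e | e. e \<in> E \<and> L e = a} \<and>
        F' = {t e | e. e \<in> E \<and> s e \<in> F \<and> L e = a}}"

definition trim_step ::
  "('d \<Rightarrow> 'w) \<Rightarrow> ('d \<Rightarrow> 'w) \<Rightarrow> 'w set \<times> 'd set \<Rightarrow> 'w set \<times> 'd set" where
  "trim_step src trg WD =
     (let W = fst WD; D = snd WD;
          W' = {v \<in> W. (\<exists>d\<in>D. src d = v) \<and> (\<exists>d\<in>D. trg d = v)}
      in (W', {d \<in> D. src d \<in> W' \<and> trg d \<in> W'}))"

text \<open>Result of repeatedly removing sinks and sources (the decreasing sequence of
  iterates is eventually constant for finite graphs; its limit is the intersection).\<close>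
definition trim_vertices :: "('d \<Rightarrow> 'w) \<Rightarrow> ('d \<Rightarrow> 'w) \<Rightarrow> 'w set \<times> 'd set \<Rightarrow> 'w set" where
  "trim_vertices src trg WD = (\<Inter>n. fst ((trim_step src trg ^^ n) WD))"
definition trim_edges :: "('d \<Rightarrow> 'w) \<Rightarrow> ('d \<Rightarrow> 'w) \<Rightarrow> 'w set \<times> 'd set \<Rightarrow> 'd set" where
  "trim_edges src trg WD = (\<Inter>n. snd ((trim_step src trg ^^ n) WD))"

definition sc_vertices ::
  "'v set \<Rightarrow> 'e set \<Rightarrow> ('e \<Rightarrow> 'v) \<Rightarrow> ('e \<Rightarrow> 'v) \<Rightarrow> ('e \<Rightarrow> 'a) \<Rightarrow> 'v set set" where
  "sc_vertices V E s t L = trim_vertices sc_src sc_trg (sc_vertices0 V, sc_edges0 V E s t L)"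
definition sc_edges ::
  "'v set \<Rightarrow> 'e set \<Rightarrow> ('e \<Rightarrow> 'v) \<Rightarrow> ('e \<Rightarrow> 'v) \<Rightarrow> ('e \<Rightarrow> 'a) \<Rightarrow> ('v set \<times> 'a \<times> 'v set) set" where
  "sc_edges V E s t L = trim_edges sc_src sc_trg (sc_vertices0 V, sc_edges0 V E s t L)"

end

(*
  Proof idea: a point z of the subset shift is recovered from its label sequence and its
  lifts, the paths of G that carry the labels of z and run through its vertex sets; dually,
  since G is right-resolving, any nonempty set of paths with a common label sequence traces
  a point of the subset shift.  The conjugacy phi maps the lifts of z onto the lifts of the
  point traced by their images with labels psi of the labels of z, and this defines phi''.
  It commutes with the shift, the same construction for the inverse maps inverts it, and it
  is continuous because phi is uniformly continuous on the compact edge shift while the lifts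
  of two points agreeing on a window can be matched on that window (right-resolvingness again).
*)
theory Submission
  imports Defs
begin

section \<open>Cylinders and locally constant maps\<close>

definition agree :: "int \<Rightarrow> (int \<Rightarrow> 'a) \<Rightarrow> (int \<Rightarrow> 'a) \<Rightarrow> bool" where
  "agree m x y \<longleftrightarrow> (\<forall>j\<in>{-m..m}. x j = y j)"

definition locally_constant_on :: "(int \<Rightarrow> 'a) set \<Rightarrow> ((int \<Rightarrow> 'a) \<Rightarrow> 'b) \<Rightarrow> bool" where
  "locally_constant_on S f \<longleftrightarrow> (\<forall>x\<in>S. \<exists>m. \<forall>y\<in>S. agree m x y \<longrightarrow> f y = f x)"

lemma agree_refl [simp]: "agree m x x"
  by (simp add: agree_def)

lemma agree_sym: "agree m x y \<Longrightarrow> agree m y x"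
  by (simp add: agree_def)

lemma agree_mono: "agree m x y \<Longrightarrow> m' \<le> m \<Longrightarrow> agree m' x y"
  by (simp add: agree_def)

lemma agree_trans: "agree m x y \<Longrightarrow> agree m y z \<Longrightarrow> agree m x z"
  by (simp add: agree_def)

lemma agree_label_map: "agree m x y \<Longrightarrow> agree m (label_map L x) (label_map L y)"
  by (simp add: agree_def label_map_def)

lemma topspace_full_shift_top [simp]: "topspace full_shift_top = UNIV"
  by (simp add: full_shift_top_def)

lemma openin_cylinder: "openin full_shift_top {y. agree m x y}"
proof -
  have "{y. agree m x y} = Pi\<^sub>E UNIV (\<lambda>j. if j \<in> {-m..m} then {x j} else UNIV)"
    by (auto simp: agree_def PiE_iff split: if_splits)
  moreover have "finite {j. (if j \<in> {-m..m} then {x j} else UNIV) \<noteq> UNIV}"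
    by (rule finite_subset[of _ "{-m..m}"]) auto
  ultimately show ?thesis
    by (simp add: full_shift_top_def openin_PiE_gen)
qed

lemma openin_full_shift_top_contains_cylinder:
  assumes "openin full_shift_top T" "x \<in> T"
  obtains m where "{y. agree m x y} \<subseteq> T"
proof -
  from assms obtain U where fin: "finite {i. U i \<noteq> UNIV}" and xU: "x \<in> Pi\<^sub>E UNIV U"
    and UT: "Pi\<^sub>E UNIV U \<subseteq> T"
    unfolding full_shift_top_def openin_product_topology_alt by fastforce
  define m where "m = Max (insert 0 (abs ` {i. U i \<noteq> UNIV}))"
  have "y i \<in> U i" if "agree m x y" for y i
  proof (cases "U i = UNIV")
    case False
    then have "\<bar>i\<bar> \<le> m"
      unfolding m_def using fin by (intro Max_ge) auto
    then have "y i = x i"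
      using that[unfolded agree_def, rule_format, of i] by (simp add: abs_le_iff)
    then show ?thesis
      using xU by auto
  qed auto
  then have "{y. agree m x y} \<subseteq> Pi\<^sub>E UNIV U"
    by (auto simp: PiE_iff)
  then show thesis
    by (rule that[OF order_trans[OF _ UT]])
qed

lemma continuous_map_discrete_iff_locally_constant:
  "continuous_map (subtopology full_shift_top S) (discrete_topology UNIV) f \<longleftrightarrow>
   locally_constant_on S f"
proof
  assume cont: "continuous_map (subtopology full_shift_top S) (discrete_topology UNIV) f"
  show "locally_constant_on S f"
    unfolding locally_constant_on_def
  proof
    fix x assume "x \<in> S"
    have "openin (subtopology full_shift_top S) {y \<in> S. f y \<in> {f x}}"
      using openin_continuous_map_preimage[OF cont, of "{f x}"] by simp
    then obtain T where T: "openin full_shift_top T" "{y \<in> S. f y = f x} = T \<inter> S"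
      unfolding openin_subtopology by auto
    then have "x \<in> T"
      using \<open>x \<in> S\<close> by blast
    with T(1) obtain m where "{y. agree m x y} \<subseteq> T"
      by (rule openin_full_shift_top_contains_cylinder)
    then have "\<forall>y\<in>S. agree m x y \<longrightarrow> f y = f x"
      using T(2) by blast
    then show "\<exists>m. \<forall>y\<in>S. agree m x y \<longrightarrow> f y = f x" ..
  qed
next
  assume lc: "locally_constant_on S f"
  have "openin (subtopology full_shift_top S) {x \<in> S. f x \<in> U}" for U
  proof (subst openin_subopen, intro ballI)
    fix x assume x: "x \<in> {x \<in> S. f x \<in> U}"
    then obtain m where m: "\<forall>y\<in>S. agree m x y \<longrightarrow> f y = f x"
      using lc by (auto simp: locally_constant_on_def)
    have "openin (subtopology full_shift_top S) ({y. agree m x y} \<inter> S)"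
      by (rule openin_subtopology_Int[OF openin_cylinder])
    moreover have "{y. agree m x y} \<inter> S \<subseteq> {x \<in> S. f x \<in> U}"
      using m x by auto
    moreover have "x \<in> {y. agree m x y} \<inter> S"
      using x by simp
    ultimately show "\<exists>T. openin (subtopology full_shift_top S) T \<and> x \<in> T \<and> T \<subseteq> {x \<in> S. f x \<in> U}"
      by blast
  qed
  then show "continuous_map (subtopology full_shift_top S) (discrete_topology UNIV) f"
    by (simp add: continuous_map_def)
qed

lemma continuous_map_full_shift_iff:
  "continuous_map (subtopology full_shift_top S) (subtopology full_shift_top T) f \<longleftrightarrow>
   f \<in> S \<rightarrow> T \<and> (\<forall>i. locally_constant_on S (\<lambda>x. f x i))"
proof -
  have "continuous_map X full_shift_top f \<longleftrightarrow>
        (\<forall>i. continuous_map X (discrete_topology UNIV) (\<lambda>x. f x i))" for X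
    unfolding full_shift_top_def by (rule continuous_map_componentwise_UNIV)
  then show ?thesis
    unfolding continuous_map_in_subtopology continuous_map_discrete_iff_locally_constant[symmetric]
    by auto
qed

lemma locally_constant_on_compose:
  assumes "locally_constant_on S f"
  shows "locally_constant_on S (\<lambda>x. h (f x))"
  unfolding locally_constant_on_def
proof
  fix x assume "x \<in> S"
  with assms obtain m where "\<forall>y\<in>S. agree m x y \<longrightarrow> f y = f x"
    unfolding locally_constant_on_def by blast
  then show "\<exists>m. \<forall>y\<in>S. agree m x y \<longrightarrow> h (f y) = h (f x)"
    by (intro exI[of _ m]) simp
qed

lemma locally_constant_on_label_map:
  assumes "locally_constant_on T f" "label_map L ` S \<subseteq> T"
  shows "locally_constant_on S (\<lambda>x. f (label_map L x))"
  unfolding locally_constant_on_def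
proof
  fix x assume "x \<in> S"
  then obtain m where m: "\<forall>y'\<in>T. agree m (label_map L x) y' \<longrightarrow> f y' = f (label_map L x)"
    using assms unfolding locally_constant_on_def by blast
  show "\<exists>m. \<forall>y\<in>S. agree m x y \<longrightarrow> f (label_map L y) = f (label_map L x)"
    using m assms(2) by (intro exI[of _ m]) (auto dest: agree_label_map)
qed

lemma compactin_uniformly_locally_constant:
  assumes "compactin full_shift_top S" "locally_constant_on S f"
  obtains M where "M \<ge> 0" "\<forall>x\<in>S. \<forall>y\<in>S. agree M x y \<longrightarrow> f y = f x"
proof -
  obtain m where m: "\<forall>x\<in>S. \<forall>y\<in>S. agree (m x) x y \<longrightarrow> f y = f x"
    using bchoice[OF assms(2)[unfolded locally_constant_on_def]] by blast
  define cyl where "cyl x = {y. agree (m x) x y}" for x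
  have "(\<forall>B\<in>cyl ` S. openin full_shift_top B) \<and> S \<subseteq> \<Union>(cyl ` S)"
    by (auto simp: cyl_def openin_cylinder)
  then obtain \<F> where "finite \<F>" "\<F> \<subseteq> cyl ` S" "S \<subseteq> \<Union>\<F>"
    using assms(1)[unfolded compactin_def, THEN conjunct2, rule_format, of "cyl ` S"] by blast
  then obtain S0 where S0: "S0 \<subseteq> S" "finite S0" "S \<subseteq> \<Union>(cyl ` S0)"
    using finite_subset_image[of \<F> cyl S] by blast
  define M where "M = Max (insert 0 (m ` S0))"
  have "f y = f x" if "x \<in> S" "y \<in> S" "agree M x y" for x y
  proof -
    obtain c where c: "c \<in> S0" "agree (m c) c x"
      using S0(3) \<open>x \<in> S\<close> by (auto simp: cyl_def)
    have "m c \<le> M"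
      unfolding M_def using S0(2) c(1) by (intro Max_ge) auto
    then have "agree (m c) c y"
      by (rule agree_trans[OF c(2) agree_mono[OF \<open>agree M x y\<close>]])
    moreover have "c \<in> S"
      using c(1) S0(1) by blast
    ultimately have "f y = f c" and "f x = f c"
      using m c(2) that by blast+
    then show ?thesis
      by (rule trans[OF _ sym])
  qed
  moreover have "M \<ge> 0"
    unfolding M_def using S0(2) by simp
  ultimately show thesis
    using that by blast
qed

section \<open>Edge shifts and the subset construction\<close>

lemma shift_in_edge_shift: "x \<in> edge_shift E s t \<Longrightarrow> shift x \<in> edge_shift E s t"
  by (simp add: edge_shift_def shift_def)

lemma unshift_in_edge_shift: "x \<in> edge_shift E s t \<Longrightarrow> (\<lambda>k. x (k - 1)) \<in> edge_shift E s t"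
  by (simp add: edge_shift_def)

lemma edge_shift_mono: "D \<subseteq> D' \<Longrightarrow> edge_shift D s t \<subseteq> edge_shift D' s t"
  by (auto simp: edge_shift_def)

lemma compactin_edge_shift:
  fixes E :: "'e set"
  assumes "finite E"
  shows "compactin full_shift_top (edge_shift E s t)"
proof -
  have "compactin full_shift_top (Pi\<^sub>E UNIV (\<lambda>_. E))"
    unfolding full_shift_top_def compactin_PiE using assms by (simp add: finite_imp_compactin)
  moreover have "edge_shift E s t \<subseteq> Pi\<^sub>E UNIV (\<lambda>_. E)"
    by (auto simp: edge_shift_def)
  moreover have "closedin full_shift_top (edge_shift E s t)"
  proof -
    have cont: "continuous_map full_shift_top (discrete_topology UNIV) (\<lambda>x :: int \<Rightarrow> 'e. (x i, x (i + 1)))"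
      for i
    proof -
      have "i \<in> {-(\<bar>i\<bar> + 1)..\<bar>i\<bar> + 1}" "i + 1 \<in> {-(\<bar>i\<bar> + 1)..\<bar>i\<bar> + 1}"
        by auto
      then have "locally_constant_on UNIV (\<lambda>x :: int \<Rightarrow> 'e. (x i, x (i + 1)))"
        unfolding locally_constant_on_def agree_def by (intro ballI exI[of _ "\<bar>i\<bar> + 1"]) auto
      then show ?thesis
        using continuous_map_discrete_iff_locally_constant[of UNIV "\<lambda>x :: int \<Rightarrow> 'e. (x i, x (i + 1))"]
        by simp
    qed
    have "closedin full_shift_top {x. x i \<in> E \<and> t (x i) = s (x (i + 1))}" for i
      using closedin_continuous_map_preimage[OF cont[of i], of "{(e, e'). e \<in> E \<and> t e = s e'}"]
      by simp
    then have "closedin full_shift_top (\<Inter>i. {x. x i \<in> E \<and> t (x i) = s (x (i + 1))})"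
      by (intro closedin_Inter) blast+
    moreover have "(\<Inter>i. {x. x i \<in> E \<and> t (x i) = s (x (i + 1))}) = edge_shift E s t"
      by (auto simp: edge_shift_def)
    ultimately show ?thesis
      by simp
  qed
  ultimately show ?thesis
    by (rule closed_compactin)
qed

lemma right_resolving_paths_agree:
  assumes rr: "right_resolving E s L"
    and x: "x \<in> edge_shift E s t" and x': "x' \<in> edge_shift E s t"
    and start: "s (x a) = s (x' a)" and labels: "\<forall>j\<in>{a..b}. L (x j) = L (x' j)"
  shows "\<forall>j\<in>{a..b}. x j = x' j"
proof -
  have edges: "x j \<in> E" "x' j \<in> E" "t (x j) = s (x (j + 1))" "t (x' j) = s (x' (j + 1))" for j
    using x x' by (auto simp: edge_shift_def)
  have determined: "e = e'" if "e \<in> E" "e' \<in> E" "s e = s e'" "L e = L e'" for e e'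
    using rr that by (auto simp: right_resolving_def)
  have "j \<le> b \<longrightarrow> x j = x' j" if "a \<le> j" for j
    using that
  proof (induction j rule: int_ge_induct)
    case base
    show ?case
      using determined[OF edges(1,2) start] labels by simp
  next
    case (step j)
    show ?case
    proof
      assume "j + 1 \<le> b"
      with step.IH have "x j = x' j"
        by simp
      then have "s (x (j + 1)) = s (x' (j + 1))"
        using edges(3,4) by metis
      moreover have "L (x (j + 1)) = L (x' (j + 1))"
        using labels step.hyps \<open>j + 1 \<le> b\<close> by simp
      ultimately show "x (j + 1) = x' (j + 1)"
        using determined edges(1,2) by blast
    qed
  qed
  then show ?thesis
    by simp
qed

lemma trim_step_keeps_path:
  fixes x :: "int \<Rightarrow> 'd"
  assumes path: "\<And>i. trg (x i) = src (x (i + 1))"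
    and inv: "\<And>i. x i \<in> snd WD \<and> src (x i) \<in> fst WD"
  shows "x i \<in> snd (trim_step src trg WD) \<and> src (x i) \<in> fst (trim_step src trg WD)"
proof -
  have "src (x j) \<in> fst WD \<and> (\<exists>d\<in>snd WD. src d = src (x j)) \<and> (\<exists>d\<in>snd WD. trg d = src (x j))" for j
    using inv[of j] inv[of "j - 1"] path[of "j - 1"] by auto
  then show ?thesis
    using inv[of i] path[of i] by (simp add: trim_step_def Let_def)
qed

lemma edge_shift_trim_edges:
  assumes "\<forall>d\<in>D. src d \<in> W \<and> trg d \<in> W"
  shows "edge_shift (trim_edges src trg (W, D)) src trg = edge_shift D src trg"
proof
  have "trim_edges src trg (W, D) \<subseteq> snd ((trim_step src trg ^^ 0) (W, D))"
    unfolding trim_edges_def by (rule INT_lower) simp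
  then show "edge_shift (trim_edges src trg (W, D)) src trg \<subseteq> edge_shift D src trg"
    by (simp add: edge_shift_mono)
next
  show "edge_shift D src trg \<subseteq> edge_shift (trim_edges src trg (W, D)) src trg"
  proof
    fix x assume x: "x \<in> edge_shift D src trg"
    then have path: "trg (x i) = src (x (i + 1))" for i
      by (simp add: edge_shift_def)
    have "x i \<in> snd ((trim_step src trg ^^ n) (W, D)) \<and> src (x i) \<in> fst ((trim_step src trg ^^ n) (W, D))"
      for n i
    proof (induction n arbitrary: i)
      case 0
      then show ?case
        using x assms by (simp add: edge_shift_def)
    next
      case (Suc n)
      then show ?case
        using trim_step_keeps_path[of trg x src, OF path] by simp
    qed
    then show "x \<in> edge_shift (trim_edges src trg (W, D)) src trg"
      using path by (simp add: edge_shift_def trim_edges_def)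
  qed
qed

lemma sc_edge_shift_iff:
  "z \<in> edge_shift (sc_edges V E s t L) sc_src sc_trg \<longleftrightarrow>
   (\<forall>i. sc_src (z i) \<in> sc_vertices0 V \<and>
        sc_src (z i) \<subseteq> {s e |e. e \<in> E \<and> L e = sc_label (z i)} \<and>
        sc_trg (z i) = sc_src (z (i + 1)) \<and>
        sc_src (z (i + 1)) = {t e |e. e \<in> E \<and> s e \<in> sc_src (z i) \<and> L e = sc_label (z i)})"
  (is "_ \<longleftrightarrow> (\<forall>i. ?edge i)")
proof -
  have "edge_shift (sc_edges V E s t L) sc_src sc_trg = edge_shift (sc_edges0 V E s t L) sc_src sc_trg"
    unfolding sc_edges_def
    by (rule edge_shift_trim_edges) (auto simp: sc_edges0_def sc_src_def sc_trg_def)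
  moreover have mem: "d \<in> sc_edges0 V E s t L \<longleftrightarrow>
      sc_src d \<in> sc_vertices0 V \<and> sc_trg d \<in> sc_vertices0 V \<and>
      sc_src d \<subseteq> {s e |e. e \<in> E \<and> L e = sc_label d} \<and>
      sc_trg d = {t e |e. e \<in> E \<and> s e \<in> sc_src d \<and> L e = sc_label d}" for d
    by (cases d) (auto simp: sc_edges0_def sc_src_def sc_trg_def sc_label_def)
  ultimately have "z \<in> edge_shift (sc_edges V E s t L) sc_src sc_trg \<longleftrightarrow>
      (\<forall>i. z i \<in> sc_edges0 V E s t L \<and> sc_trg (z i) = sc_src (z (i + 1)))"
    by (simp add: edge_shift_def)
  also have "\<dots> \<longleftrightarrow> (\<forall>i. ?edge i \<and> sc_trg (z i) \<in> sc_vertices0 V)"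
    unfolding mem by (intro iff_allI) auto
  also have "\<dots> \<longleftrightarrow> (\<forall>i. ?edge i)"
  proof (intro iffI allI)
    fix i
    assume "\<forall>i. ?edge i"
    then have "?edge i" "?edge (i + 1)"
      by blast+
    then show "?edge i \<and> sc_trg (z i) \<in> sc_vertices0 V"
      by simp
  qed simp
  finally show ?thesis .
qed

section \<open>Lifts of points of the subset shift\<close>

lemma nat_chain:
  assumes start: "v \<in> F 0" and step: "\<And>n u. u \<in> F n \<Longrightarrow> \<exists>u'\<in>F (Suc n). R n u u'"
  obtains f where "f 0 = v" "\<And>n. f n \<in> F n" "\<And>n. R n (f n) (f (Suc n))"
proof -
  have "\<exists>f. \<forall>n. (f n \<in> F n \<and> (n = 0 \<longrightarrow> f n = v)) \<and> R n (f n) (f (Suc n))"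
    by (rule dependent_nat_choice) (use start step in blast)+
  then show thesis
    using that by blast
qed

lemma bi_infinite_chain:
  fixes F :: "int \<Rightarrow> 'a set"
  assumes fwd: "\<And>k u. u \<in> F k \<Longrightarrow> \<exists>u'\<in>F (k + 1). R k u u'"
    and bwd: "\<And>k u'. u' \<in> F (k + 1) \<Longrightarrow> \<exists>u\<in>F k. R k u u'"
    and v: "v \<in> F i"
  obtains w where "w i = v" "\<And>k. w k \<in> F k" "\<And>k. R k (w k) (w (k + 1))"
proof -
  have fwd_nat: "\<exists>u'\<in>F (i + int (Suc n)). R (i + int n) u u'" if "u \<in> F (i + int n)" for n u
    using fwd[OF that] by (simp add: ac_simps)
  have bwd_nat: "\<exists>u'\<in>F (i - int (Suc n)). R (i - int (Suc n)) u' u" if "u \<in> F (i - int n)" for n u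
    using bwd[of u "i - int (Suc n)"] that by simp
  have "v \<in> F (i + int 0)" "v \<in> F (i - int 0)"
    using v by simp_all
  obtain f where f: "f 0 = v" "\<And>n. f n \<in> F (i + int n)" "\<And>n. R (i + int n) (f n) (f (Suc n))"
    by (rule nat_chain[where F = "\<lambda>n. F (i + int n)", OF \<open>v \<in> F (i + int 0)\<close> fwd_nat that])
  obtain b where b: "b 0 = v" "\<And>n. b n \<in> F (i - int n)" "\<And>n. R (i - int (Suc n)) (b (Suc n)) (b n)"
    by (rule nat_chain[where F = "\<lambda>n. F (i - int n)", OF \<open>v \<in> F (i - int 0)\<close> bwd_nat that])
  define w where "w k = (if i \<le> k then f (nat (k - i)) else b (nat (i - k)))" for k
  have "w k \<in> F k" for k
    using f(2)[of "nat (k - i)"] b(2)[of "nat (i - k)"] by (cases "i \<le> k") (simp_all add: w_def)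
  moreover have "R k (w k) (w (k + 1))" for k
  proof (cases "i \<le> k")
    case True
    then obtain n where "k = i + int n"
      using zle_iff_zadd by blast
    moreover have "nat (int n + 1) = Suc n"
      by arith
    ultimately show ?thesis
      using f(3)[of n] by (simp add: w_def)
  next
    case False
    then obtain n where "i = k + 1 + int n"
      using zle_iff_zadd[of "k + 1" i] by auto
    moreover have "nat (1 + int n) = Suc n"
      by arith
    ultimately show ?thesis
      using b(3)[of n] b(1) f(1) by (auto simp: w_def)
  qed
  moreover have "w i = v"
    using f(1) by (simp add: w_def)
  ultimately show thesis
    using that by blast
qed

definition lifts ::
  "'e set \<Rightarrow> ('e \<Rightarrow> 'v) \<Rightarrow> ('e \<Rightarrow> 'v) \<Rightarrow> ('e \<Rightarrow> 'a) \<Rightarrow> (int \<Rightarrow> 'v set \<times> 'a \<times> 'v set) \<Rightarrow> (int \<Rightarrow> 'e) set"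
  where "lifts E s t L z =
    {x \<in> edge_shift E s t. \<forall>i. L (x i) = sc_label (z i) \<and> s (x i) \<in> sc_src (z i)}"

lemma lifts_subset_edge_shift: "lifts E s t L z \<subseteq> edge_shift E s t"
  by (simp add: lifts_def)

lemma label_map_lift: "x \<in> lifts E s t L z \<Longrightarrow> label_map L x = label_map sc_label z"
  by (simp add: lifts_def label_map_def fun_eq_iff)

lemma lifts_through_vertex:
  assumes z: "z \<in> edge_shift (sc_edges V E s t L) sc_src sc_trg" and v: "v \<in> sc_src (z i)"
  obtains x where "x \<in> lifts E s t L z" "s (x i) = v"
proof -
  from z have src_sub: "sc_src (z k) \<subseteq> {s e |e. e \<in> E \<and> L e = sc_label (z k)}"
    and src_next: "sc_src (z (k + 1)) = {t e |e. e \<in> E \<and> s e \<in> sc_src (z k) \<and> L e = sc_label (z k)}"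
    for k
    by (simp_all add: sc_edge_shift_iff)
  define F where "F k = {e \<in> E. L e = sc_label (z k) \<and> s e \<in> sc_src (z k)}" for k
  have fwd: "\<exists>e'\<in>F (k + 1). t e = s e'" if "e \<in> F k" for k e
  proof -
    have "t e \<in> sc_src (z (k + 1))"
      using that src_next[of k] by (auto simp: F_def)
    then show ?thesis
      using src_sub[of "k + 1"] by (force simp: F_def)
  qed
  have bwd: "\<exists>e\<in>F k. t e = s e'" if "e' \<in> F (k + 1)" for k e'
    using that src_next[of k] by (force simp: F_def)
  obtain e0 where "e0 \<in> F i" "s e0 = v"
    using v src_sub[of i] by (force simp: F_def)
  obtain x where x: "x i = e0" "\<And>k. x k \<in> F k" "\<And>k. t (x k) = s (x (k + 1))"
    using bi_infinite_chain[where R = "\<lambda>_ e e'. t e = s e'", OF fwd bwd \<open>e0 \<in> F i\<close>] by blast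
  then have "x \<in> lifts E s t L z"
    by (simp add: lifts_def F_def edge_shift_def)
  then show thesis
    using that x(1) \<open>s e0 = v\<close> by blast
qed

lemma lifts_nonempty:
  assumes "z \<in> edge_shift (sc_edges V E s t L) sc_src sc_trg"
  shows "lifts E s t L z \<noteq> {}"
proof -
  have "sc_src (z 0) \<in> sc_vertices0 V"
    using assms by (simp add: sc_edge_shift_iff)
  then obtain v where "v \<in> sc_src (z 0)"
    by (auto simp: sc_vertices0_def)
  then obtain x where "x \<in> lifts E s t L z"
    by (rule lifts_through_vertex[OF assms])
  then show ?thesis
    by blast
qed

lemma sc_src_eq_lift_sources:
  assumes "z \<in> edge_shift (sc_edges V E s t L) sc_src sc_trg"
  shows "sc_src (z i) = (\<lambda>x. s (x i)) ` lifts E s t L z"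
proof
  show "sc_src (z i) \<subseteq> (\<lambda>x. s (x i)) ` lifts E s t L z"
  proof
    fix v assume "v \<in> sc_src (z i)"
    then obtain x where "x \<in> lifts E s t L z" "s (x i) = v"
      by (rule lifts_through_vertex[OF assms])
    then show "v \<in> (\<lambda>x. s (x i)) ` lifts E s t L z"
      by blast
  qed
qed (auto simp: lifts_def)

definition sc_trace :: "('e \<Rightarrow> 'v) \<Rightarrow> (int \<Rightarrow> 'e) set \<Rightarrow> (int \<Rightarrow> 'a) \<Rightarrow> int \<Rightarrow> 'v set \<times> 'a \<times> 'v set"
  where "sc_trace s P y i = ((\<lambda>x. s (x i)) ` P, y i, (\<lambda>x. s (x (i + 1))) ` P)"

lemma label_map_sc_trace [simp]: "label_map sc_label (sc_trace s P y) = y"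
  by (simp add: label_map_def sc_label_def sc_trace_def)

lemma sc_trace_shift: "sc_trace s (shift ` P) (shift y) = shift (sc_trace s P y)"
  by (simp add: sc_trace_def shift_def image_image fun_eq_iff)

lemma sc_trace_lifts:
  assumes "z \<in> edge_shift (sc_edges V E s t L) sc_src sc_trg"
  shows "sc_trace s (lifts E s t L z) (label_map sc_label z) = z"
proof
  fix i
  have "sc_trg (z i) = sc_src (z (i + 1))"
    using assms by (simp add: sc_edge_shift_iff)
  then have "z i = (sc_src (z i), sc_label (z i), sc_src (z (i + 1)))"
    by (cases "z i") (simp add: sc_src_def sc_label_def sc_trg_def)
  then show "sc_trace s (lifts E s t L z) (label_map sc_label z) i = z i"
    using sc_src_eq_lift_sources[OF assms] by (simp add: sc_trace_def label_map_def)
qed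

lemma sc_trace_in_sc_edge_shift:
  assumes V: "\<forall>e\<in>E. s e \<in> V" and rr: "right_resolving E s L"
    and P: "P \<subseteq> edge_shift E s t" "P \<noteq> {}" and labels: "\<And>x. x \<in> P \<Longrightarrow> label_map L x = y"
  shows "sc_trace s P y \<in> edge_shift (sc_edges V E s t L) sc_src sc_trg"
proof -
  have edges: "x i \<in> E" "t (x i) = s (x (i + 1))" "L (x i) = y i" if "x \<in> P" for x i
    using that P(1) labels[OF that] by (auto simp: edge_shift_def label_map_def fun_eq_iff)
  define A where "A i = (\<lambda>x. s (x i)) ` P" for i
  have "A i \<in> sc_vertices0 V" for i
    using V P(2) edges(1) by (auto simp: A_def sc_vertices0_def)
  moreover have "A i \<subseteq> {s e |e. e \<in> E \<and> L e = y i}" for i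
    using edges by (auto simp: A_def)
  moreover have "A (i + 1) = {t e |e. e \<in> E \<and> s e \<in> A i \<and> L e = y i}" for i
  proof
    show "A (i + 1) \<subseteq> {t e |e. e \<in> E \<and> s e \<in> A i \<and> L e = y i}"
    proof
      fix w assume "w \<in> A (i + 1)"
      then obtain x where "x \<in> P" "w = s (x (i + 1))"
        by (auto simp: A_def)
      then show "w \<in> {t e |e. e \<in> E \<and> s e \<in> A i \<and> L e = y i}"
        using edges[of x i] by (intro CollectI exI[of _ "x i"]) (auto simp: A_def)
    qed
  next
    show "{t e |e. e \<in> E \<and> s e \<in> A i \<and> L e = y i} \<subseteq> A (i + 1)"
    proof
      fix w assume "w \<in> {t e |e. e \<in> E \<and> s e \<in> A i \<and> L e = y i}"
      then obtain e x where "w = t e" "e \<in> E" "L e = y i" "x \<in> P" "s e = s (x i)"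
        by (auto simp: A_def)
      moreover from this have "e = x i"
        using rr edges[of x i] by (auto simp: right_resolving_def)
      ultimately show "w \<in> A (i + 1)"
        using edges(2) by (auto simp: A_def)
    qed
  qed
  ultimately show ?thesis
    by (simp add: sc_edge_shift_iff sc_trace_def sc_src_def sc_trg_def sc_label_def A_def)
qed

lemma lifts_shift: "lifts E s t L (shift z) = shift ` lifts E s t L z"
proof
  show "shift ` lifts E s t L z \<subseteq> lifts E s t L (shift z)"
    by (auto simp: lifts_def shift_def intro: shift_in_edge_shift[unfolded shift_def])
next
  show "lifts E s t L (shift z) \<subseteq> shift ` lifts E s t L z"
  proof
    fix x assume x: "x \<in> lifts E s t L (shift z)"
    then have "x \<in> edge_shift E s t"
      and lift: "L (x k) = sc_label (z (k + 1)) \<and> s (x k) \<in> sc_src (z (k + 1))" for k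
      by (simp_all add: lifts_def shift_def)
    moreover have "L (x (k - 1)) = sc_label (z k) \<and> s (x (k - 1)) \<in> sc_src (z k)" for k
      using lift[of "k - 1"] by simp
    ultimately have "(\<lambda>k. x (k - 1)) \<in> lifts E s t L z"
      using unshift_in_edge_shift by (simp add: lifts_def)
    moreover have "x = shift (\<lambda>k. x (k - 1))"
      by (simp add: shift_def)
    ultimately show "x \<in> shift ` lifts E s t L z"
      by blast
  qed
qed

lemma lifts_image_eq_if_agree:
  assumes rr: "right_resolving E s L"
    and z: "z \<in> edge_shift (sc_edges V E s t L) sc_src sc_trg"
    and z': "z' \<in> edge_shift (sc_edges V E s t L) sc_src sc_trg"
    and "agree M z z'" "M \<ge> 0"
    and f: "\<forall>x\<in>edge_shift E s t. \<forall>x'\<in>edge_shift E s t. agree M x x' \<longrightarrow> f x' = f x"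
  shows "f ` lifts E s t L z = f ` lifts E s t L z'"
proof -
  have sub: "f ` lifts E s t L z1 \<subseteq> f ` lifts E s t L z2"
    if z1: "z1 \<in> edge_shift (sc_edges V E s t L) sc_src sc_trg"
      and z2: "z2 \<in> edge_shift (sc_edges V E s t L) sc_src sc_trg"
      and "agree M z1 z2" for z1 z2
  proof
    fix w assume "w \<in> f ` lifts E s t L z1"
    then obtain x where x: "x \<in> lifts E s t L z1" "w = f x"
      by blast
    have window: "z1 j = z2 j" if "j \<in> {-M..M}" for j
      using \<open>agree M z1 z2\<close> that by (simp add: agree_def)
    have "s (x (-M)) \<in> sc_src (z1 (-M))"
      using x(1) by (simp add: lifts_def)
    moreover have "z1 (-M) = z2 (-M)"
      using window \<open>M \<ge> 0\<close> by simp
    ultimately have "s (x (-M)) \<in> sc_src (z2 (-M))"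
      by simp
    (* z2 has a lift starting where x enters the window; right-resolvingness makes it follow x. *)
    then obtain x' where x': "x' \<in> lifts E s t L z2" "s (x' (-M)) = s (x (-M))"
      by (rule lifts_through_vertex[OF z2])
    have paths: "x \<in> edge_shift E s t" "x' \<in> edge_shift E s t"
      using x(1) x'(1) lifts_subset_edge_shift by blast+
    have "\<forall>j\<in>{-M..M}. L (x j) = L (x' j)"
      using x(1) x'(1) window by (simp add: lifts_def)
    then have "agree M x x'"
      using right_resolving_paths_agree[OF rr paths x'(2)[symmetric]] by (simp add: agree_def)
    then have "f x' = f x"
      using f paths by blast
    then have "f x' = w"
      using x(2) by simp
    then show "w \<in> f ` lifts E s t L z2"
      using x'(1) by blast
  qed
  show ?thesis
    using sub[OF z z' \<open>agree M z z'\<close>] sub[OF z' z agree_sym[OF \<open>agree M z z'\<close>]] by (rule subset_antisym)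
qed

section \<open>Transport of the subset construction along a conjugacy\<close>

lemma homeomorphic_maps_full_shiftD:
  assumes "homeomorphic_maps (subtopology full_shift_top X) (subtopology full_shift_top Y) f g"
  shows "\<And>x. x \<in> X \<Longrightarrow> f x \<in> Y" "\<And>y. y \<in> Y \<Longrightarrow> g y \<in> X"
    "\<And>x. x \<in> X \<Longrightarrow> g (f x) = x" "\<And>y. y \<in> Y \<Longrightarrow> f (g y) = y"
  using assms by (auto simp: homeomorphic_maps_def continuous_map_def)

lemma homeomorphic_maps_shift_commute_inverse:
  assumes homeo: "homeomorphic_maps (subtopology full_shift_top X) (subtopology full_shift_top Y) f g"
    and X: "\<And>x. x \<in> X \<Longrightarrow> shift x \<in> X" and commute: "\<forall>x\<in>X. f (shift x) = shift (f x)"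
  shows "\<forall>y\<in>Y. g (shift y) = shift (g y)"
proof
  fix y assume "y \<in> Y"
  then have "g y \<in> X" "f (g y) = y"
    using homeomorphic_maps_full_shiftD[OF homeo] by blast+
  then have "g (shift y) = g (f (shift (g y)))"
    using commute by simp
  also have "\<dots> = shift (g y)"
    using homeomorphic_maps_full_shiftD(3)[OF homeo] X \<open>g y \<in> X\<close> by blast
  finally show "g (shift y) = shift (g y)" .
qed

lemma homeomorphic_maps_full_shift_locally_constant:
  assumes "homeomorphic_maps (subtopology full_shift_top X) (subtopology full_shift_top Y) f g"
  shows "locally_constant_on X (\<lambda>x. f x i)" "locally_constant_on Y (\<lambda>y. g y i)"
  using assms by (simp_all add: homeomorphic_maps_def continuous_map_full_shift_iff)

lemma label_map_shift: "label_map L (shift x) = shift (label_map L x)"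
  by (simp add: label_map_def shift_def)

lemma shift_in_label_image:
  assumes "y \<in> label_map L ` edge_shift E s t"
  shows "shift y \<in> label_map L ` edge_shift E s t"
proof -
  obtain x where "x \<in> edge_shift E s t" "y = label_map L x"
    using assms by blast
  then show ?thesis
    by (intro image_eqI[of _ _ "shift x"]) (simp_all add: label_map_shift shift_in_edge_shift)
qed

lemma sc_label_in_label_image:
  assumes "z \<in> edge_shift (sc_edges V E s t L) sc_src sc_trg"
  shows "label_map sc_label z \<in> label_map L ` edge_shift E s t"
proof -
  obtain x where "x \<in> lifts E s t L z"
    using lifts_nonempty[OF assms] by blast
  then show ?thesis
    using label_map_lift lifts_subset_edge_shift by (metis image_eqI subsetD)
qed

(* The conjugacy \<phi>'' of the statement is sc_map for G, H, \<phi>, \<psi>. *)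
definition sc_map ::
  "'e set \<Rightarrow> ('e \<Rightarrow> 'v) \<Rightarrow> ('e \<Rightarrow> 'v) \<Rightarrow> ('e \<Rightarrow> 'a) \<Rightarrow> ('f \<Rightarrow> 'w) \<Rightarrow> ((int \<Rightarrow> 'e) \<Rightarrow> int \<Rightarrow> 'f) \<Rightarrow>
   ((int \<Rightarrow> 'a) \<Rightarrow> int \<Rightarrow> 'a) \<Rightarrow> (int \<Rightarrow> 'v set \<times> 'a \<times> 'v set) \<Rightarrow> int \<Rightarrow> 'w set \<times> 'a \<times> 'w set"
  where "sc_map E s t L s' \<phi> \<psi> z = sc_trace s' (\<phi> ` lifts E s t L z) (\<psi> (label_map sc_label z))"

locale labeled_conjugacy =
  fixes VG :: "'v set" and EG :: "'e set" and sG tG :: "'e \<Rightarrow> 'v" and LG :: "'e \<Rightarrow> 'a"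
    and VH :: "'w set" and EH :: "'f set" and sH tH :: "'f \<Rightarrow> 'w" and LH :: "'f \<Rightarrow> 'a"
    and \<phi> :: "(int \<Rightarrow> 'e) \<Rightarrow> int \<Rightarrow> 'f" and \<phi>' :: "(int \<Rightarrow> 'f) \<Rightarrow> int \<Rightarrow> 'e"
    and \<psi> \<psi>' :: "(int \<Rightarrow> 'a) \<Rightarrow> int \<Rightarrow> 'a"
  assumes graph_G: "fin_graph_no_sink_source VG EG sG tG"
    and graph_H: "fin_graph_no_sink_source VH EH sH tH"
    and right_resolving_G: "right_resolving EG sG LG"
    and right_resolving_H: "right_resolving EH sH LH"
    and edge_homeo: "homeomorphic_maps (subtopology full_shift_top (edge_shift EG sG tG))
      (subtopology full_shift_top (edge_shift EH sH tH)) \<phi> \<phi>'"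
    and edge_commute: "\<forall>x\<in>edge_shift EG sG tG. \<phi> (shift x) = shift (\<phi> x)"
    and label_homeo: "homeomorphic_maps (subtopology full_shift_top (label_map LG ` edge_shift EG sG tG))
      (subtopology full_shift_top (label_map LH ` edge_shift EH sH tH)) \<psi> \<psi>'"
    and label_commute: "\<forall>y\<in>label_map LG ` edge_shift EG sG tG. \<psi> (shift y) = shift (\<psi> y)"
    and label_compat: "\<forall>x\<in>edge_shift EG sG tG. label_map LH (\<phi> x) = \<psi> (label_map LG x)"
begin

abbreviation "XG \<equiv> edge_shift EG sG tG"
abbreviation "XH \<equiv> edge_shift EH sH tH"
abbreviation "YG \<equiv> label_map LG ` XG"
abbreviation "XG'' \<equiv> edge_shift (sc_edges VG EG sG tG LG) sc_src sc_trg"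
abbreviation "XH'' \<equiv> edge_shift (sc_edges VH EH sH tH LH) sc_src sc_trg"
abbreviation "\<Phi> \<equiv> sc_map EG sG tG LG sH \<phi> \<psi>"

lemmas edge_maps = homeomorphic_maps_full_shiftD[OF edge_homeo]
lemmas label_maps = homeomorphic_maps_full_shiftD[OF label_homeo]

lemma sym: "labeled_conjugacy VH EH sH tH LH VG EG sG tG LG \<phi>' \<phi> \<psi>' \<psi>"
proof unfold_locales
  show "homeomorphic_maps (subtopology full_shift_top XH) (subtopology full_shift_top XG) \<phi>' \<phi>"
    using edge_homeo homeomorphic_maps_sym by blast
  show "homeomorphic_maps (subtopology full_shift_top (label_map LH ` XH)) (subtopology full_shift_top YG) \<psi>' \<psi>"
    using label_homeo homeomorphic_maps_sym by blast
  show "\<forall>u\<in>XH. \<phi>' (shift u) = shift (\<phi>' u)"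
    using edge_homeo shift_in_edge_shift edge_commute by (rule homeomorphic_maps_shift_commute_inverse)
  show "\<forall>w\<in>label_map LH ` XH. \<psi>' (shift w) = shift (\<psi>' w)"
    using label_homeo shift_in_label_image label_commute by (rule homeomorphic_maps_shift_commute_inverse)
  show "\<forall>u\<in>XH. label_map LG (\<phi>' u) = \<psi>' (label_map LH u)"
  proof
    fix u assume "u \<in> XH"
    then have "\<phi>' u \<in> XG" "\<phi> (\<phi>' u) = u"
      using edge_maps by blast+
    then have "label_map LH u = \<psi> (label_map LG (\<phi>' u))"
      using label_compat by metis
    then show "label_map LG (\<phi>' u) = \<psi>' (label_map LH u)"
      using label_maps(3) \<open>\<phi>' u \<in> XG\<close> by simp
  qed
qed (rule graph_H graph_G right_resolving_H right_resolving_G)+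

lemma label_map_phi_lift:
  assumes "x \<in> lifts EG sG tG LG z"
  shows "label_map LH (\<phi> x) = \<psi> (label_map sc_label z)"
proof -
  have "x \<in> XG"
    using assms lifts_subset_edge_shift by blast
  then show ?thesis
    using label_compat label_map_lift[OF assms] by simp
qed

lemma sc_map_in: "z \<in> XG'' \<Longrightarrow> \<Phi> z \<in> XH''"
  unfolding sc_map_def
proof (rule sc_trace_in_sc_edge_shift)
  show "\<forall>e\<in>EH. sH e \<in> VH"
    using graph_H by (simp add: fin_graph_no_sink_source_def)
  show "\<phi> ` lifts EG sG tG LG z \<subseteq> XH"
    using edge_maps(1) lifts_subset_edge_shift by blast
  show "\<phi> ` lifts EG sG tG LG z \<noteq> {}" if "z \<in> XG''"
    using lifts_nonempty[OF that] by blast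
  show "label_map LH u = \<psi> (label_map sc_label z)" if "u \<in> \<phi> ` lifts EG sG tG LG z" for u
    using that label_map_phi_lift by blast
qed (rule right_resolving_H)

lemma label_map_sc_map: "label_map sc_label (\<Phi> z) = \<psi> (label_map sc_label z)"
  by (simp add: sc_map_def)

lemma inverse_of_lift_is_lift:
  assumes z: "z \<in> XG''" and u: "u \<in> lifts EH sH tH LH (\<Phi> z)"
  shows "\<phi>' u \<in> lifts EG sG tG LG z"
proof -
  have uX: "u \<in> XH"
    using u lifts_subset_edge_shift by blast
  have u_label: "LH (u k) = \<psi> (label_map sc_label z) k"
    and u_src: "sH (u k) \<in> (\<lambda>x. sH (\<phi> x k)) ` lifts EG sG tG LG z" for k
    using u by (simp_all add: lifts_def sc_map_def sc_trace_def sc_label_def sc_src_def image_image)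
  have "LG (\<phi>' u j) = sc_label (z j) \<and> sG (\<phi>' u j) \<in> sc_src (z j)" for j
  proof -
    obtain m where m: "\<forall>v\<in>XH. agree m u v \<longrightarrow> \<phi>' v j = \<phi>' u j"
      using homeomorphic_maps_full_shift_locally_constant(2)[OF edge_homeo] uX
      unfolding locally_constant_on_def by blast
    obtain x where x: "x \<in> lifts EG sG tG LG z" "sH (\<phi> x (-m)) = sH (u (-m))"
      using u_src[of "-m"] by auto
    have xX: "x \<in> XG" and phi_xX: "\<phi> x \<in> XH"
      using x(1) lifts_subset_edge_shift edge_maps(1) by blast+
    have "\<forall>k\<in>{-m..m}. LH (u k) = LH (\<phi> x k)"
      using u_label label_map_phi_lift[OF x(1)] by (simp add: label_map_def fun_eq_iff)
    then have "agree m u (\<phi> x)"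
      using right_resolving_paths_agree[OF right_resolving_H uX phi_xX x(2)[symmetric]]
      by (simp add: agree_def)
    (* This is where continuity of the inverse enters: u is close to \<phi> x, so \<phi>' u j = x j. *)
    then have "\<phi>' u j = x j"
      using m phi_xX edge_maps(3)[OF xX] by metis
    then show ?thesis
      using x(1) by (simp add: lifts_def)
  qed
  moreover have "\<phi>' u \<in> XG"
    using edge_maps(2) uX by blast
  ultimately show ?thesis
    by (simp add: lifts_def)
qed

lemma lifts_sc_map:
  assumes z: "z \<in> XG''"
  shows "lifts EH sH tH LH (\<Phi> z) = \<phi> ` lifts EG sG tG LG z"
proof
  show "lifts EH sH tH LH (\<Phi> z) \<subseteq> \<phi> ` lifts EG sG tG LG z"
  proof
    fix u assume u: "u \<in> lifts EH sH tH LH (\<Phi> z)"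
    then have "u = \<phi> (\<phi>' u)"
      using edge_maps(4) lifts_subset_edge_shift by (metis subsetD)
    then show "u \<in> \<phi> ` lifts EG sG tG LG z"
      using inverse_of_lift_is_lift[OF z u] by blast
  qed
next
  show "\<phi> ` lifts EG sG tG LG z \<subseteq> lifts EH sH tH LH (\<Phi> z)"
  proof
    fix u assume "u \<in> \<phi> ` lifts EG sG tG LG z"
    then obtain x where x: "x \<in> lifts EG sG tG LG z" "u = \<phi> x"
      by blast
    then have "u \<in> XH"
      using edge_maps(1) lifts_subset_edge_shift by blast
    moreover have "LH (u k) = sc_label (\<Phi> z k)" for k
      using label_map_phi_lift[OF x(1)] x(2)
      by (simp add: sc_map_def sc_trace_def sc_label_def label_map_def fun_eq_iff)
    moreover have "sH (u k) \<in> sc_src (\<Phi> z k)" for k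
      using x by (simp add: sc_map_def sc_trace_def sc_src_def)
    ultimately show "u \<in> lifts EH sH tH LH (\<Phi> z)"
      by (simp add: lifts_def)
  qed
qed

lemma sc_map_shift:
  assumes z: "z \<in> XG''"
  shows "\<Phi> (shift z) = shift (\<Phi> z)"
proof -
  have "\<phi> ` lifts EG sG tG LG (shift z) = shift ` \<phi> ` lifts EG sG tG LG z"
    unfolding lifts_shift image_image
    using edge_commute lifts_subset_edge_shift by (intro image_cong) blast+
  moreover have "\<psi> (label_map sc_label (shift z)) = shift (\<psi> (label_map sc_label z))"
    using bspec[OF label_commute sc_label_in_label_image[OF z]] by (simp add: label_map_shift)
  ultimately show ?thesis
    by (simp add: sc_map_def sc_trace_shift)
qed

lemma uniformly_locally_constant_source_of_phi:
  obtains M where "M \<ge> 0" "\<forall>x\<in>XG. \<forall>x'\<in>XG. agree M x x' \<longrightarrow> sH (\<phi> x' j) = sH (\<phi> x j)"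
proof -
  have "compactin full_shift_top XG"
    using graph_G by (simp add: fin_graph_no_sink_source_def compactin_edge_shift)
  moreover have "locally_constant_on XG (\<lambda>x. sH (\<phi> x j))"
    by (rule locally_constant_on_compose[OF homeomorphic_maps_full_shift_locally_constant(1)[OF edge_homeo]])
  ultimately show thesis
    using that by (rule compactin_uniformly_locally_constant)
qed

lemma locally_constant_sc_map: "locally_constant_on XG'' (\<lambda>z. \<Phi> z i)"
  unfolding locally_constant_on_def
proof
  fix z assume z: "z \<in> XG''"
  (* Uniformity is needed: \<Phi> z i depends on all lifts of z at once. *)
  obtain M1 where M1: "M1 \<ge> 0" "\<forall>x\<in>XG. \<forall>x'\<in>XG. agree M1 x x' \<longrightarrow> sH (\<phi> x' i) = sH (\<phi> x i)"
    by (rule uniformly_locally_constant_source_of_phi)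
  obtain M2 where
    M2: "M2 \<ge> 0" "\<forall>x\<in>XG. \<forall>x'\<in>XG. agree M2 x x' \<longrightarrow> sH (\<phi> x' (i + 1)) = sH (\<phi> x (i + 1))"
    by (rule uniformly_locally_constant_source_of_phi)
  have "locally_constant_on XG'' (\<lambda>z. \<psi> (label_map sc_label z) i)"
    using homeomorphic_maps_full_shift_locally_constant(1)[OF label_homeo] sc_label_in_label_image
    by (intro locally_constant_on_label_map) blast+
  then obtain m where m: "\<forall>z'\<in>XG''. agree m z z' \<longrightarrow> \<psi> (label_map sc_label z') i = \<psi> (label_map sc_label z) i"
    using z unfolding locally_constant_on_def by blast
  have "\<Phi> z' i = \<Phi> z i" if z': "z' \<in> XG''" and "agree (max m (max M1 M2)) z z'" for z'
  proof -
    have "agree m z z'" "agree M1 z z'" "agree M2 z z'"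
      using \<open>agree (max m (max M1 M2)) z z'\<close> agree_mono by fastforce+
    then have "(\<lambda>x. sH (\<phi> x i)) ` lifts EG sG tG LG z = (\<lambda>x. sH (\<phi> x i)) ` lifts EG sG tG LG z'"
      and "(\<lambda>x. sH (\<phi> x (i + 1))) ` lifts EG sG tG LG z = (\<lambda>x. sH (\<phi> x (i + 1))) ` lifts EG sG tG LG z'"
      and "\<psi> (label_map sc_label z') i = \<psi> (label_map sc_label z) i"
      using lifts_image_eq_if_agree[OF right_resolving_G z z' _ M1(1) M1(2)]
        lifts_image_eq_if_agree[OF right_resolving_G z z' _ M2(1) M2(2)] m z'
      by simp_all
    then show ?thesis
      by (simp add: sc_map_def sc_trace_def image_image)
  qed
  then show "\<exists>m. \<forall>z'\<in>XG''. agree m z z' \<longrightarrow> \<Phi> z' i = \<Phi> z i"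
    by blast
qed

lemma continuous_map_sc_map:
  "continuous_map (subtopology full_shift_top XG'') (subtopology full_shift_top XH'') \<Phi>"
  using sc_map_in locally_constant_sc_map by (simp add: continuous_map_full_shift_iff)

lemma sc_map_inverse:
  assumes z: "z \<in> XG''"
  shows "sc_map EH sH tH LH sG \<phi>' \<psi>' (\<Phi> z) = z"
proof -
  have "\<phi>' ` \<phi> ` lifts EG sG tG LG z = lifts EG sG tG LG z"
    using edge_maps(3) lifts_subset_edge_shift by (force simp: image_image)
  moreover have "\<psi>' (\<psi> (label_map sc_label z)) = label_map sc_label z"
    using label_maps(3) sc_label_in_label_image[OF z] by blast
  ultimately show ?thesis
    using sc_trace_lifts[OF z] by (simp add: sc_map_def[of EH] lifts_sc_map[OF z] label_map_sc_map)
qed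

lemma conjugacy_sc_map: "conjugacy XG'' XH'' \<Phi>"
proof -
  interpret inverse: labeled_conjugacy VH EH sH tH LH VG EG sG tG LG \<phi>' \<phi> \<psi>' \<psi>
    by (rule sym)
  have "homeomorphic_maps (subtopology full_shift_top XG'') (subtopology full_shift_top XH'') \<Phi> inverse.\<Phi>"
    using continuous_map_sc_map inverse.continuous_map_sc_map sc_map_inverse inverse.sc_map_inverse
    by (simp add: homeomorphic_maps_def)
  then show ?thesis
    unfolding conjugacy_def homeomorphic_map_maps using sc_map_shift by blast
qed

end

theorem corollary4p3:
  fixes VG :: "'v set" and EG :: "'e set" and sG tG :: "'e \<Rightarrow> 'v" and LG :: "'e \<Rightarrow> 'a"
    and VH :: "'w set" and EH :: "'f set" and sH tH :: "'f \<Rightarrow> 'w" and LH :: "'f \<Rightarrow> 'a"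
    and \<psi> :: "(int \<Rightarrow> 'a) \<Rightarrow> (int \<Rightarrow> 'a)"
    and \<phi> :: "(int \<Rightarrow> 'e) \<Rightarrow> (int \<Rightarrow> 'f)"
  assumes "fin_graph_no_sink_source VG EG sG tG"
    and "fin_graph_no_sink_source VH EH sH tH"
    and "right_resolving EG sG LG"
    and "right_resolving EH sH LH"
    and "conjugacy (label_map LG ` edge_shift EG sG tG) (label_map LH ` edge_shift EH sH tH) \<psi>"
    and "conjugacy (edge_shift EG sG tG) (edge_shift EH sH tH) \<phi>"
    and "\<forall>x \<in> edge_shift EG sG tG. label_map LH (\<phi> x) = \<psi> (label_map LG x)"
  shows "\<exists>\<phi>''. conjugacy (edge_shift (sc_edges VG EG sG tG LG) sc_src sc_trg)
                          (edge_shift (sc_edges VH EH sH tH LH) sc_src sc_trg) \<phi>'' \<and>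
              (\<forall>x \<in> edge_shift (sc_edges VG EG sG tG LG) sc_src sc_trg.
                 label_map sc_label (\<phi>'' x) = \<psi> (label_map sc_label x))"
proof -
  obtain \<phi>' where \<phi>': "homeomorphic_maps (subtopology full_shift_top (edge_shift EG sG tG))
      (subtopology full_shift_top (edge_shift EH sH tH)) \<phi> \<phi>'"
    using assms(6) unfolding conjugacy_def homeomorphic_map_maps by blast
  obtain \<psi>' where \<psi>': "homeomorphic_maps (subtopology full_shift_top (label_map LG ` edge_shift EG sG tG))
      (subtopology full_shift_top (label_map LH ` edge_shift EH sH tH)) \<psi> \<psi>'"
    using assms(5) unfolding conjugacy_def homeomorphic_map_maps by blast
  interpret labeled_conjugacy VG EG sG tG LG VH EH sH tH LH \<phi> \<phi>' \<psi> \<psi>'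
    by (rule labeled_conjugacy.intro) (use assms \<phi>' \<psi>' in \<open>simp_all add: conjugacy_def\<close>)
  show ?thesis
    using conjugacy_sc_map label_map_sc_map by blast
qed

end
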